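(* Let $\Omega\subset\mathbb{R}^d$, $d\in\{2,3\}$, be a bounded Lipschitz polyhedral domain, $\mu>0$, $\lambda\in[0,\infty]$. Consider the strongly symmetric discretization: finite-dimensional $\Sigma_h^{\mathrm{sym}}\subset\Sigma^{\mathrm{sym}}$, $V_h\subset V$, and find $(\sigma_h,u_h)\in\Sigma_h^{\mathrm{sym}}\times V_h$ with $$a(\sigma_h,\tau_h)+b(\tau_h,u_h)=\langle\tau_h n,g\rangle_{\partial\Omega}+(F,\tau_h)_{L^2(\Omega)}\ \forall\tau_h\in\Sigma_h^{\mathrm{sym}},\qquad b(\sigma_h,v_h)=(f,v_h)_{L^2(\Omega)}\ \forall v_h\in V_h,$$ and the weakly symmetric discretization: finite-dimensional $\Sigma_h\subset\Sigma$, $V_h\subset V$, $\Xi_h\subset\Xi$, and find $(\sigma_h,u_h,\omega_h)\in\Sigma_h\times V_h\times\Xi_h$ with $$a(\sigma_h,\tau_h)+b(\tau_h,u_h)+c(\tau_h,\omega_h)=\langle\tau_h n,g\rangle_{\partial\Omega}+(F,\tau_h)_{L^2(\Omega)}\ \forall\tau_h\in\Sigma_h,$$ $$b(\sigma_h,v_h)=(f,v_h)_{L^2(\Omega)}\ \forall v_h\in V_h,\qquad c(\sigma_h,\xi_h)=0\ \forall\xi_h\in\Xi_h.$$ Assume each discretization satisfies the discrete Babuška–Brezzi conditions (discrete kernel coercivity of $a$ and discrete inf-sup condition), so it is uniquely solvable. If the strongly symmetric discretization satisfies $$\{\tau_h\in\Sigma_h^{\mathrm{sym}}:(\nabla\cdot\tau_h,v_h)_{L^2(\Omega)}=0\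 \forall v_h\in V_h\}\subset\{\tau\in\Sigma^{\mathrm{sym}}:\nabla\cdot\tau\equiv 0\},$$ then it is material robust. Similarly, if the weakly symmetric discretization satisfies $$\{\tau_h\in\Sigma_h:(\nabla\cdot\tau_h,v_h)_{L^2(\Omega)}+(\tau_h,\xi_h)_{L^2(\Omega)}=0\ \forall v_h\in V_h,\ \forall\xi_h\in\Xi_h\}\subset\{\tau\in\Sigma^{\mathrm{sym}}:\nabla\cdot\tau\equiv 0\},$$ then it is material robust.
   Context: Data: $f\in L^2(\Omega;\mathbb{R}^d)$, $g\in H^{1/2}(\partial\Omega;\mathbb{R}^d)$, $F\in L^2(\Omega;\mathbb{R}^{d\times d}_{\mathrm{sym}})$ (when $\lambda=\infty$ also $\int_{\partial\Omega}g\cdot n\,ds=-\int_\Omega\operatorname{tr}F\,dx$). $\langle\cdot,\cdot\rangle_{\partial\Omega}$ is the $H^{-1/2}$–$H^{1/2}$ duality on $\partial\Omega$, $n$ the outward normal; divergence of a matrix is taken row-wise. $H(\mathrm{div};\Omega,\circ)$ is the space of $L^2$ matrix fields with values in $\circ$ whose divergence is in $L^2(\Omega;\mathbb{R}^d)$; $H_*(\mathrm{div};\Omega,\circ)$ is its subspace with $\int_\Omega\operatorname{tr}\tau\,dx=0$. Set $\Sigma^{\mathrm{sym}}=H(\mathrm{div};\Omega,\mathbb{R}^{d\times d}_{\mathrm{sym}})$ and $\Sigma=H(\mathrm{div};\Omega,\mathbb{R}^{d\times d})$ if $\lambda<\infty$, and the corresponding $H_*$ spaces if $\lambda=\infty$;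 $V=L^2(\Omega;\mathbb{R}^d)$; $\Xi=L^2(\Omega;\mathbb{R}^{d\times d}_{\mathrm{skew}})$ (skew-symmetric matrices). With $\tau^D:=\tau-\frac1d(\operatorname{tr}\tau)I$, $$a(\sigma,\tau)=\frac{1}{2\mu}(\sigma^D,\tau^D)_{L^2(\Omega)}+\frac{1}{d(2\mu+d\lambda)}(\operatorname{tr}\sigma,\operatorname{tr}\tau)_{L^2(\Omega)}$$ (second term absent when $\lambda=\infty$), $b(\sigma,v)=(\nabla\cdot\sigma,v)_{L^2(\Omega)}$, $c(\tau,\xi)=(\tau,\xi)_{L^2(\Omega)}$. The continuous strongly symmetric problem is: find $(\sigma,u)\in\Sigma^{\mathrm{sym}}\times V$ with $a(\sigma,\tau)+b(\tau,u)=\langle\tau n,g\rangle_{\partial\Omega}+(F,\tau)$ for all $\tau\in\Sigma^{\mathrm{sym}}$ and $b(\sigma,v)=(f,v)$ for all $v\in V$ (it is uniquely solvable, and equivalent in its $(\sigma,u)$ components to the analogous weakly symmetric continuous problem on $\Sigma\times V\times\Xi$). A discretization is called material robust if the approximation to any stress-free state is stress-free pointwise: whenever the data are such that the exact stress satisfies $\sigma\equiv 0$, the discrete stress satisfies $\sigma_h\equiv 0$. *)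

theory Defs
  imports "HOL-Analysis.Analysis"
begin

definition lipschitz_domain :: "(real^'d) set \<Rightarrow> bool" where
  "lipschitz_domain \<Omega> \<longleftrightarrow> open \<Omega> \<and> connected \<Omega> \<and> bounded \<Omega> \<and> \<Omega> \<noteq> {} \<and>
     (\<forall>x\<in>frontier \<Omega>. \<exists>(e::real^'d) r (\<phi>::real^'d \<Rightarrow> real) C.
        norm e = 1 \<and> r > 0 \<and> C-lipschitz_on {y. y \<bullet> e = 0} \<phi> \<and>
        \<Omega> \<inter> ball x r = {y \<in> ball x r. (y - x) \<bullet> e < \<phi> ((y - x) - ((y - x) \<bullet> e) *\<^sub>R e)})"

definition polyhedral_domain :: "(real^'d) set \<Rightarrow> bool" where
  "polyhedral_domain \<Omega> \<longleftrightarrow> (\<exists>P. finite P \<and> (\<forall>p\<in>P. polytope p) \<and> closure \<Omega> = \<Union>P)"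

definition L2 :: "(real^'d) set \<Rightarrow> (real^'d \<Rightarrow> 'b::euclidean_space) set" where
  "L2 \<Omega> = {f. f \<in> borel_measurable (lebesgue_on \<Omega>) \<and>
                integrable (lebesgue_on \<Omega>) (\<lambda>x. (norm (f x))\<^sup>2)}"

definition L2ip :: "(real^'d) set \<Rightarrow> (real^'d \<Rightarrow> 'b::euclidean_space) \<Rightarrow> (real^'d \<Rightarrow> 'b) \<Rightarrow> real" where
  "L2ip \<Omega> f g = (LINT x|lebesgue_on \<Omega>. f x \<bullet> g x)"

definition L2norm :: "(real^'d) set \<Rightarrow> (real^'d \<Rightarrow> 'b::euclidean_space) \<Rightarrow> real" where
  "L2norm \<Omega> f = sqrt (L2ip \<Omega> f f)"

fun iter_pd :: "'d list \<Rightarrow> (real^'d \<Rightarrow> real) \<Rightarrow> (real^'d \<Rightarrow> real)" where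
  "iter_pd [] \<phi> = \<phi>"
| "iter_pd (j # js) \<phi> = (\<lambda>x. frechet_derivative (iter_pd js \<phi>) (at x) (axis j 1))"

definition pd :: "'d \<Rightarrow> (real^'d \<Rightarrow> real) \<Rightarrow> (real^'d \<Rightarrow> real)" where
  "pd j \<phi> = iter_pd [j] \<phi>"

definition test_fun :: "(real^'d) set \<Rightarrow> (real^'d \<Rightarrow> real) \<Rightarrow> bool" where
  "test_fun \<Omega> \<phi> \<longleftrightarrow> (\<forall>js x. iter_pd js \<phi> differentiable (at x)) \<and>
      compact (closure {x. \<phi> x \<noteq> 0}) \<and> closure {x. \<phi> x \<noteq> 0} \<subseteq> \<Omega>"

text \<open>Weak (row-wise) divergence of a matrix field, weak gradient of a vector field
  (convention: (grad G) i j = partial_j G_i).\<close>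
definition is_wdiv :: "(real^'d) set \<Rightarrow> (real^'d \<Rightarrow> real^'d^'d) \<Rightarrow> (real^'d \<Rightarrow> real^'d) \<Rightarrow> bool" where
  "is_wdiv \<Omega> \<sigma> w \<longleftrightarrow> (\<forall>\<phi>. test_fun \<Omega> \<phi> \<longrightarrow> (\<forall>i.
      (LINT x|lebesgue_on \<Omega>. (\<Sum>j\<in>UNIV. \<sigma> x $ i $ j * pd j \<phi> x)) =
      - (LINT x|lebesgue_on \<Omega>. w x $ i * \<phi> x)))"

definition is_wgrad :: "(real^'d) set \<Rightarrow> (real^'d \<Rightarrow> real^'d) \<Rightarrow> (real^'d \<Rightarrow> real^'d^'d) \<Rightarrow> bool" where
  "is_wgrad \<Omega> G D \<longleftrightarrow> (\<forall>\<phi>. test_fun \<Omega> \<phi> \<longrightarrow> (\<forall>i j.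
      (LINT x|lebesgue_on \<Omega>. G x $ i * pd j \<phi> x) =
      - (LINT x|lebesgue_on \<Omega>. D x $ i $ j * \<phi> x)))"

definition Hdiv :: "(real^'d) set \<Rightarrow> (real^'d \<Rightarrow> real^'d^'d) set" where
  "Hdiv \<Omega> = {\<sigma> \<in> L2 \<Omega>. \<exists>w \<in> L2 \<Omega>. is_wdiv \<Omega> \<sigma> w}"

definition wdiv :: "(real^'d) set \<Rightarrow> (real^'d \<Rightarrow> real^'d^'d) \<Rightarrow> (real^'d \<Rightarrow> real^'d)" where
  "wdiv \<Omega> \<sigma> = (SOME w. w \<in> L2 \<Omega> \<and> is_wdiv \<Omega> \<sigma> w)"

definition H1 :: "(real^'d) set \<Rightarrow> (real^'d \<Rightarrow> real^'d) set" where
  "H1 \<Omega> = {G \<in> L2 \<Omega>. \<exists>D \<in> L2 \<Omega>. is_wgrad \<Omega> G D}"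

definition wgrad :: "(real^'d) set \<Rightarrow> (real^'d \<Rightarrow> real^'d) \<Rightarrow> (real^'d \<Rightarrow> real^'d^'d)" where
  "wgrad \<Omega> G = (SOME D. D \<in> L2 \<Omega> \<and> is_wgrad \<Omega> G D)"

definition hdiv_norm :: "(real^'d) set \<Rightarrow> (real^'d \<Rightarrow> real^'d^'d) \<Rightarrow> real" where
  "hdiv_norm \<Omega> \<tau> = sqrt (L2ip \<Omega> \<tau> \<tau> + L2ip \<Omega> (wdiv \<Omega> \<tau>) (wdiv \<Omega> \<tau>))"

definition Sigma_full :: "(real^'d) set \<Rightarrow> ereal \<Rightarrow> (real^'d \<Rightarrow> real^'d^'d) set" where
  "Sigma_full \<Omega> lam = {\<tau> \<in> Hdiv \<Omega>.
      lam = \<infinity> \<longrightarrow> (LINT x|lebesgue_on \<Omega>. trace (\<tau> x)) = 0}"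

definition Sigma_sym :: "(real^'d) set \<Rightarrow> ereal \<Rightarrow> (real^'d \<Rightarrow> real^'d^'d) set" where
  "Sigma_sym \<Omega> lam = {\<tau> \<in> Sigma_full \<Omega> lam.
      AE x in lebesgue_on \<Omega>. transpose (\<tau> x) = \<tau> x}"

definition Xi :: "(real^'d) set \<Rightarrow> (real^'d \<Rightarrow> real^'d^'d) set" where
  "Xi \<Omega> = {\<xi> \<in> L2 \<Omega>. AE x in lebesgue_on \<Omega>. transpose (\<xi> x) = - \<xi> x}"

definition fin_dim_space :: "('a \<Rightarrow> 'b::real_vector) set \<Rightarrow> bool" where
  "fin_dim_space S \<longleftrightarrow> (\<exists>B. finite B \<and> S = {(\<lambda>x. \<Sum>b\<in>B. c b *\<^sub>R b x) | c. True})"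

definition dev :: "real^'d^'d \<Rightarrow> real^'d^'d" where
  "dev M = M - (trace M / real CARD('d)) *\<^sub>R mat 1"

definition a_form :: "(real^'d) set \<Rightarrow> real \<Rightarrow> ereal \<Rightarrow>
    (real^'d \<Rightarrow> real^'d^'d) \<Rightarrow> (real^'d \<Rightarrow> real^'d^'d) \<Rightarrow> real" where
  "a_form \<Omega> \<mu> lam \<sigma> \<tau> =
     1 / (2 * \<mu>) * L2ip \<Omega> (\<lambda>x. dev (\<sigma> x)) (\<lambda>x. dev (\<tau> x)) +
     (if lam = \<infinity> then 0
      else 1 / (real CARD('d) * (2 * \<mu> + real CARD('d) * real_of_ereal lam)) *
           (LINT x|lebesgue_on \<Omega>. trace (\<sigma> x) * trace (\<tau> x)))"

definition b_form :: "(real^'d) set \<Rightarrow> (real^'d \<Rightarrow> real^'d^'d) \<Rightarrow> (real^'d \<Rightarrow> real^'d) \<Rightarrow> real" where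
  "b_form \<Omega> \<sigma> v = L2ip \<Omega> (wdiv \<Omega> \<sigma>) v"

definition c_form :: "(real^'d) set \<Rightarrow> (real^'d \<Rightarrow> real^'d^'d) \<Rightarrow> (real^'d \<Rightarrow> real^'d^'d) \<Rightarrow> real" where
  "c_form \<Omega> \<tau> \<xi> = L2ip \<Omega> \<tau> \<xi>"

text \<open>Boundary duality pairing <tau n, g> where g is the trace of G in H1:
  defined through Green's formula  (div tau, G) + (tau, grad G).\<close>
definition bdry_pair :: "(real^'d) set \<Rightarrow> (real^'d \<Rightarrow> real^'d^'d) \<Rightarrow> (real^'d \<Rightarrow> real^'d) \<Rightarrow> real" where
  "bdry_pair \<Omega> \<tau> G = L2ip \<Omega> (wdiv \<Omega> \<tau>) G + L2ip \<Omega> \<tau> (wgrad \<Omega> G)"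

definition data_ok :: "(real^'d) set \<Rightarrow> ereal \<Rightarrow> (real^'d \<Rightarrow> real^'d) \<Rightarrow>
    (real^'d \<Rightarrow> real^'d) \<Rightarrow> (real^'d \<Rightarrow> real^'d^'d) \<Rightarrow> bool" where
  "data_ok \<Omega> lam f G F \<longleftrightarrow> f \<in> L2 \<Omega> \<and> G \<in> H1 \<Omega> \<and> F \<in> L2 \<Omega> \<and>
     (AE x in lebesgue_on \<Omega>. transpose (F x) = F x) \<and>
     (lam = \<infinity> \<longrightarrow> (LINT x|lebesgue_on \<Omega>. trace (wgrad \<Omega> G x)) =
                     - (LINT x|lebesgue_on \<Omega>. trace (F x)))"

definition cont_solves :: "(real^'d) set \<Rightarrow> real \<Rightarrow> ereal \<Rightarrow> (real^'d \<Rightarrow> real^'d) \<Rightarrow>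
    (real^'d \<Rightarrow> real^'d) \<Rightarrow> (real^'d \<Rightarrow> real^'d^'d) \<Rightarrow>
    (real^'d \<Rightarrow> real^'d^'d) \<Rightarrow> (real^'d \<Rightarrow> real^'d) \<Rightarrow> bool" where
  "cont_solves \<Omega> \<mu> lam f G F \<sigma> u \<longleftrightarrow> \<sigma> \<in> Sigma_sym \<Omega> lam \<and> u \<in> L2 \<Omega> \<and>
     (\<forall>\<tau> \<in> Sigma_sym \<Omega> lam. a_form \<Omega> \<mu> lam \<sigma> \<tau> + b_form \<Omega> \<tau> u =
                              bdry_pair \<Omega> \<tau> G + L2ip \<Omega> F \<tau>) \<and>
     (\<forall>v \<in> L2 \<Omega>. b_form \<Omega> \<sigma> v = L2ip \<Omega> f v)"

definition strong_disc_solves :: "(real^'d) set \<Rightarrow> real \<Rightarrow> ereal \<Rightarrow>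
    (real^'d \<Rightarrow> real^'d^'d) set \<Rightarrow> (real^'d \<Rightarrow> real^'d) set \<Rightarrow>
    (real^'d \<Rightarrow> real^'d) \<Rightarrow> (real^'d \<Rightarrow> real^'d) \<Rightarrow> (real^'d \<Rightarrow> real^'d^'d) \<Rightarrow>
    (real^'d \<Rightarrow> real^'d^'d) \<Rightarrow> (real^'d \<Rightarrow> real^'d) \<Rightarrow> bool" where
  "strong_disc_solves \<Omega> \<mu> lam Sh Vh f G F \<sigma>h uh \<longleftrightarrow> \<sigma>h \<in> Sh \<and> uh \<in> Vh \<and>
     (\<forall>\<tau> \<in> Sh. a_form \<Omega> \<mu> lam \<sigma>h \<tau> + b_form \<Omega> \<tau> uh = bdry_pair \<Omega> \<tau> G + L2ip \<Omega> F \<tau>) \<and>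
     (\<forall>v \<in> Vh. b_form \<Omega> \<sigma>h v = L2ip \<Omega> f v)"

definition weak_disc_solves :: "(real^'d) set \<Rightarrow> real \<Rightarrow> ereal \<Rightarrow>
    (real^'d \<Rightarrow> real^'d^'d) set \<Rightarrow> (real^'d \<Rightarrow> real^'d) set \<Rightarrow> (real^'d \<Rightarrow> real^'d^'d) set \<Rightarrow>
    (real^'d \<Rightarrow> real^'d) \<Rightarrow> (real^'d \<Rightarrow> real^'d) \<Rightarrow> (real^'d \<Rightarrow> real^'d^'d) \<Rightarrow>
    (real^'d \<Rightarrow> real^'d^'d) \<Rightarrow> (real^'d \<Rightarrow> real^'d) \<Rightarrow> (real^'d \<Rightarrow> real^'d^'d) \<Rightarrow> bool" where
  "weak_disc_solves \<Omega> \<mu> lam Sh Vh Xh f G F \<sigma>h uh \<omega>h \<longleftrightarrow> \<sigma>h \<in> Sh \<and> uh \<in> Vh \<and> \<omega>h \<in> Xh \<and>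
     (\<forall>\<tau> \<in> Sh. a_form \<Omega> \<mu> lam \<sigma>h \<tau> + b_form \<Omega> \<tau> uh + c_form \<Omega> \<tau> \<omega>h =
                 bdry_pair \<Omega> \<tau> G + L2ip \<Omega> F \<tau>) \<and>
     (\<forall>v \<in> Vh. b_form \<Omega> \<sigma>h v = L2ip \<Omega> f v) \<and>
     (\<forall>\<xi> \<in> Xh. c_form \<Omega> \<sigma>h \<xi> = 0)"

definition strong_BB :: "(real^'d) set \<Rightarrow> real \<Rightarrow> ereal \<Rightarrow>
    (real^'d \<Rightarrow> real^'d^'d) set \<Rightarrow> (real^'d \<Rightarrow> real^'d) set \<Rightarrow> bool" where
  "strong_BB \<Omega> \<mu> lam Sh Vh \<longleftrightarrow>
     (\<exists>\<alpha>>0. \<forall>\<tau>\<in>Sh. (\<forall>v\<in>Vh. b_form \<Omega> \<tau> v = 0) \<longrightarrow>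
                   a_form \<Omega> \<mu> lam \<tau> \<tau> \<ge> \<alpha> * (hdiv_norm \<Omega> \<tau>)\<^sup>2) \<and>
     (\<exists>\<beta>>0. \<forall>v\<in>Vh. L2norm \<Omega> v \<noteq> 0 \<longrightarrow>
        \<beta> \<le> (SUP \<tau>\<in>{\<tau>\<in>Sh. hdiv_norm \<Omega> \<tau> \<noteq> 0}. b_form \<Omega> \<tau> v / (hdiv_norm \<Omega> \<tau> * L2norm \<Omega> v)))"

definition weak_BB :: "(real^'d) set \<Rightarrow> real \<Rightarrow> ereal \<Rightarrow>
    (real^'d \<Rightarrow> real^'d^'d) set \<Rightarrow> (real^'d \<Rightarrow> real^'d) set \<Rightarrow> (real^'d \<Rightarrow> real^'d^'d) set \<Rightarrow> bool" where
  "weak_BB \<Omega> \<mu> lam Sh Vh Xh \<longleftrightarrow>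
     (\<exists>\<alpha>>0. \<forall>\<tau>\<in>Sh. (\<forall>v\<in>Vh. \<forall>\<xi>\<in>Xh. b_form \<Omega> \<tau> v + c_form \<Omega> \<tau> \<xi> = 0) \<longrightarrow>
                   a_form \<Omega> \<mu> lam \<tau> \<tau> \<ge> \<alpha> * (hdiv_norm \<Omega> \<tau>)\<^sup>2) \<and>
     (\<exists>\<beta>>0. \<forall>v\<in>Vh. \<forall>\<xi>\<in>Xh. (L2norm \<Omega> v)\<^sup>2 + (L2norm \<Omega> \<xi>)\<^sup>2 \<noteq> 0 \<longrightarrow>
        \<beta> \<le> (SUP \<tau>\<in>{\<tau>\<in>Sh. hdiv_norm \<Omega> \<tau> \<noteq> 0}.
               (b_form \<Omega> \<tau> v + c_form \<Omega> \<tau> \<xi>) /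
               (hdiv_norm \<Omega> \<tau> * sqrt ((L2norm \<Omega> v)\<^sup>2 + (L2norm \<Omega> \<xi>)\<^sup>2))))"

definition strong_material_robust :: "(real^'d) set \<Rightarrow> real \<Rightarrow> ereal \<Rightarrow>
    (real^'d \<Rightarrow> real^'d^'d) set \<Rightarrow> (real^'d \<Rightarrow> real^'d) set \<Rightarrow> bool" where
  "strong_material_robust \<Omega> \<mu> lam Sh Vh \<longleftrightarrow>
     (\<forall>f G F. data_ok \<Omega> lam f G F \<and> (\<exists>u. cont_solves \<Omega> \<mu> lam f G F (\<lambda>x. 0) u) \<longrightarrow>
        (\<forall>\<sigma>h uh. strong_disc_solves \<Omega> \<mu> lam Sh Vh f G F \<sigma>h uh \<longrightarrow>
                  (AE x in lebesgue_on \<Omega>. \<sigma>h x = 0)))"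

definition weak_material_robust :: "(real^'d) set \<Rightarrow> real \<Rightarrow> ereal \<Rightarrow>
    (real^'d \<Rightarrow> real^'d^'d) set \<Rightarrow> (real^'d \<Rightarrow> real^'d) set \<Rightarrow> (real^'d \<Rightarrow> real^'d^'d) set \<Rightarrow> bool" where
  "weak_material_robust \<Omega> \<mu> lam Sh Vh Xh \<longleftrightarrow>
     (\<forall>f G F. data_ok \<Omega> lam f G F \<and> (\<exists>u. cont_solves \<Omega> \<mu> lam f G F (\<lambda>x. 0) u) \<longrightarrow>
        (\<forall>\<sigma>h uh \<omega>h. weak_disc_solves \<Omega> \<mu> lam Sh Vh Xh f G F \<sigma>h uh \<omega>h \<longrightarrow>
                  (AE x in lebesgue_on \<Omega>. \<sigma>h x = 0)))"

end

theory Submission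
  imports Defs "HOL-Computational_Algebra.Polynomial"
begin

(* If the exact stress vanishes, the continuous equations say that f is L2-orthogonal to every
   v (the weak divergence of the zero field vanishes by the fundamental lemma of the calculus of
   variations, proved below with smooth bumps approximating indicators of boxes) and that the load
   functional tau |-> <tau n, g> + (F, tau) vanishes on symmetric divergence-free stresses.
   Hence the discrete stress lies in the discrete kernel, so by hypothesis it is symmetric and
   divergence-free; testing the first discrete equation with sigma_h itself gives
   a(sigma_h, sigma_h) = 0, and coercivity on the discrete kernel forces sigma_h = 0.
   The strongly symmetric method is the weakly symmetric one with Xi_h = {0}. *)

section \<open>Smooth bump functions on boxes\<close>

definition infinitely_differentiable :: "(real \<Rightarrow> real) \<Rightarrow> bool" where
  "infinitely_differentiable f \<longleftrightarrow>
     (\<exists>D. D 0 = f \<and> (\<forall>k t. (D k has_real_derivative D (Suc k) t) (at t)))"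

definition poly_exp_inv :: "real poly \<Rightarrow> real \<Rightarrow> real" where
  "poly_exp_inv p t = (if t > 0 then poly p (inverse t) * exp (- inverse t) else 0)"

text \<open>The derivative of \<open>p(1/t) exp(-1/t)\<close> is \<open>q(1/t) exp(-1/t)\<close> with \<open>q = X\<^sup>2 (p - p')\<close>.\<close>
definition poly_exp_inv_deriv :: "real poly \<Rightarrow> real poly" where
  "poly_exp_inv_deriv p = [:0, 0, 1:] * (p - pderiv p)"

lemma poly_div_exp_tendsto_0: "((\<lambda>s. poly q s / exp s) \<longlongrightarrow> (0::real)) at_top"
proof -
  have "((\<lambda>s. \<Sum>i\<le>degree q. coeff q i * (s ^ i / exp s)) \<longlongrightarrow> (\<Sum>i\<le>degree q. coeff q i * 0)) at_top"
    by (intro tendsto_sum tendsto_mult tendsto_const tendsto_power_div_exp_0)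
  then show ?thesis
    by (simp add: poly_altdef sum_divide_distrib)
qed

lemma poly_exp_inv_div_tendsto_0: "((\<lambda>t. poly_exp_inv p t / t) \<longlongrightarrow> 0) (at 0)"
proof (rule filterlim_split_at)
  have "\<forall>\<^sub>F t in at_left (0::real). t < 0"
    by (simp add: eventually_at_filter)
  then show "((\<lambda>t. poly_exp_inv p t / t) \<longlongrightarrow> 0) (at_left 0)"
    by (rule Lim_transform_eventually[OF tendsto_const, OF eventually_mono])
      (simp add: poly_exp_inv_def)
  have "\<forall>\<^sub>F s in at_top. poly (p * [:0, 1:]) s / exp s = poly_exp_inv p (inverse s) / inverse s"
    using eventually_gt_at_top[of 0]
    by eventually_elim (auto simp: poly_exp_inv_def exp_minus field_simps)
  then show "((\<lambda>t. poly_exp_inv p t / t) \<longlongrightarrow> 0) (at_right 0)"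
    unfolding filterlim_at_right_to_top
    by (rule Lim_transform_eventually[OF poly_div_exp_tendsto_0])
qed

lemma has_real_derivative_poly_exp_inv:
  "(poly_exp_inv p has_real_derivative poly_exp_inv (poly_exp_inv_deriv p) t) (at t)"
proof (cases t "0::real" rule: linorder_cases)
  case less
  have "((\<lambda>s. 0) has_real_derivative 0) (at t)"
    by simp
  then have "(poly_exp_inv p has_real_derivative 0) (at t)"
    by (rule has_field_derivative_transform_within_open[where S="{..<0}"])
      (use less in \<open>auto simp: poly_exp_inv_def\<close>)
  then show ?thesis
    using less by (simp add: poly_exp_inv_def)
next
  case equal
  have "((\<lambda>s. (poly_exp_inv p s - poly_exp_inv p 0) / (s - 0)) \<longlongrightarrow> 0) (at 0)"
    using poly_exp_inv_div_tendsto_0 by (simp add: poly_exp_inv_def)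
  then show ?thesis
    using equal by (simp add: has_field_derivative_iff poly_exp_inv_def)
next
  case greater
  have "((\<lambda>s. poly p (inverse s) * exp (- inverse s)) has_real_derivative
          poly (pderiv p) (inverse t) * (- (inverse t ^ 2)) * exp (- inverse t)
          + poly p (inverse t) * (exp (- inverse t) * (inverse t ^ 2))) (at t)"
    using greater
    by (auto intro!: derivative_eq_intros DERIV_chain2[OF poly_DERIV] simp: power2_eq_square)
  moreover have "poly (pderiv p) (inverse t) * (- (inverse t ^ 2)) * exp (- inverse t)
          + poly p (inverse t) * (exp (- inverse t) * (inverse t ^ 2))
        = poly_exp_inv (poly_exp_inv_deriv p) t"
    using greater by (simp add: poly_exp_inv_def poly_exp_inv_deriv_def algebra_simps power2_eq_square)
  ultimately have "((\<lambda>s. poly p (inverse s) * exp (- inverse s)) has_real_derivative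
          poly_exp_inv (poly_exp_inv_deriv p) t) (at t)"
    by simp
  then show ?thesis
    by (rule has_field_derivative_transform_within_open[where S="{0<..}"])
      (use greater in \<open>auto simp: poly_exp_inv_def\<close>)
qed

lemma infinitely_differentiable_poly_exp_inv: "infinitely_differentiable (poly_exp_inv p)"
  unfolding infinitely_differentiable_def
  by (rule exI[of _ "\<lambda>k. poly_exp_inv ((poly_exp_inv_deriv ^^ k) p)"])
    (auto intro: has_real_derivative_poly_exp_inv)

lemma infinitely_differentiable_affine:
  assumes "infinitely_differentiable f"
  shows "infinitely_differentiable (\<lambda>t. f (c * t + e))"
proof -
  obtain D where D0: "D 0 = f" and D: "\<And>k t. (D k has_real_derivative D (Suc k) t) (at t)"
    using assms unfolding infinitely_differentiable_def by blast
  show ?thesis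
    unfolding infinitely_differentiable_def
  proof (intro exI[of _ "\<lambda>k t. c ^ k * D k (c * t + e)"] conjI allI)
    fix k t
    have "((\<lambda>t. D k (c * t + e)) has_real_derivative D (Suc k) (c * t + e) * c) (at t)"
      by (rule DERIV_chain2[OF D]) (auto intro!: derivative_eq_intros)
    then show "((\<lambda>t. c ^ k * D k (c * t + e)) has_real_derivative c ^ Suc k * D (Suc k) (c * t + e)) (at t)"
      by (auto intro!: derivative_eq_intros simp: algebra_simps)
  qed (simp add: D0)
qed

lemma infinitely_differentiable_mult:
  assumes "infinitely_differentiable f" "infinitely_differentiable g"
  shows "infinitely_differentiable (\<lambda>t. f t * g t)"
proof -
  obtain F where F0: "F 0 = f" and F: "\<And>k t. (F k has_real_derivative F (Suc k) t) (at t)"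
    using assms unfolding infinitely_differentiable_def by blast
  obtain G where G0: "G 0 = g" and G: "\<And>k t. (G k has_real_derivative G (Suc k) t) (at t)"
    using assms unfolding infinitely_differentiable_def by blast
  define H where "H n t = (\<Sum>i\<le>n. of_nat (n choose i) * F i t * G (n - i) t)" for n t
  show ?thesis
    unfolding infinitely_differentiable_def
  proof (intro exI[of _ H] conjI allI)
    show "H 0 = (\<lambda>t. f t * g t)"
      by (simp add: H_def F0 G0 fun_eq_iff)
    fix n t
    have Leibniz: "(\<Sum>i\<le>n. of_nat (n choose i) * F (Suc i) t * G (n - i) t) +
                   (\<Sum>i\<le>n. of_nat (n choose i) * F i t * G (Suc (n - i)) t) = H (Suc n) t"
    proof -
      define a where "a i = F i t * G (Suc n - i) t" for i
      have "H (Suc n) t = a 0 + (\<Sum>i\<le>n. of_nat (Suc n choose Suc i) * a (Suc i))"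
        unfolding H_def a_def by (subst sum.atMost_Suc_shift) (simp add: mult.assoc)
      also have "\<dots> = (\<Sum>i\<le>n. of_nat (n choose i) * a (Suc i)) +
                       (a 0 + (\<Sum>i\<le>n. of_nat (n choose Suc i) * a (Suc i)))"
        by (simp add: sum.distrib algebra_simps)
      also have "a 0 + (\<Sum>i\<le>n. of_nat (n choose Suc i) * a (Suc i)) = (\<Sum>i\<le>n. of_nat (n choose i) * a i)"
        using sum.atMost_Suc_shift[of "\<lambda>i. of_nat (n choose i) * a i" n] by (simp add: binomial_eq_0)
      finally show ?thesis
        by (simp add: a_def mult.assoc Suc_diff_le)
    qed
    have "(H n has_real_derivative
            (\<Sum>i\<le>n. of_nat (n choose i) * F (Suc i) t * G (n - i) t) +
            (\<Sum>i\<le>n. of_nat (n choose i) * F i t * G (Suc (n - i)) t)) (at t)"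
      unfolding H_def
      by (auto intro!: derivative_eq_intros F G simp: sum.distrib[symmetric] algebra_simps)
    with Leibniz show "(H n has_real_derivative H (Suc n) t) (at t)"
      by simp
  qed
qed

definition coord_prod :: "('d \<Rightarrow> nat \<Rightarrow> real \<Rightarrow> real) \<Rightarrow> ('d \<Rightarrow> nat) \<Rightarrow> real^'d \<Rightarrow> real" where
  "coord_prod D m x = (\<Prod>j\<in>UNIV. D j (m j) (x $ j))"

lemma has_derivative_coord_prod:
  assumes D: "\<And>j k t. (D j k has_real_derivative D j (Suc k) t) (at t)"
  shows "(coord_prod D m has_derivative
     (\<lambda>v. \<Sum>j\<in>UNIV. (D j (Suc (m j)) (x $ j) * v $ j) * (\<Prod>l\<in>UNIV - {j}. D l (m l) (x $ l)))) (at x)"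
  unfolding coord_prod_def
proof (rule has_derivative_prod)
  fix j
  have "(D j (m j) has_derivative (*) (D j (Suc (m j)) (x $ j))) (at (x $ j))"
    using D by (simp add: has_field_derivative_def)
  from diff_chain_at[OF bounded_linear_imp_has_derivative[OF bounded_linear_vec_nth] this]
  show "((\<lambda>x. D j (m j) (x $ j)) has_derivative (\<lambda>v. D j (Suc (m j)) (x $ j) * v $ j)) (at x)"
    by (simp add: o_def)
qed

lemma iter_pd_coord_prod:
  assumes D: "\<And>j k t. (D j k has_real_derivative D j (Suc k) t) (at t)"
  shows "iter_pd js (coord_prod D (\<lambda>j. 0)) = coord_prod D (count_list js)"
proof (induction js)
  case (Cons i js)
  let ?m = "count_list js"
  have "iter_pd (i # js) (coord_prod D (\<lambda>j. 0)) x =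
      (\<Sum>j\<in>UNIV. (D j (Suc (?m j)) (x $ j) * axis i 1 $ j) * (\<Prod>l\<in>UNIV - {j}. D l (?m l) (x $ l)))"
    for x
    using Cons frechet_derivative_at[OF has_derivative_coord_prod[where D=D, OF D], symmetric] by simp
  also have "\<dots> x = D i (Suc (?m i)) (x $ i) * (\<Prod>l\<in>UNIV - {i}. D l (?m l) (x $ l))" for x
    by (subst sum.remove[of UNIV i]) (auto simp: axis_def)
  also have "\<dots> x = coord_prod D (count_list (i # js)) x" for x
    unfolding coord_prod_def by (subst prod.remove[of UNIV i]) (auto intro!: prod.cong)
  finally show ?case
    by blast
qed simp

lemma iter_pd_prod_differentiable:
  assumes "\<And>j. infinitely_differentiable (h j)"
  shows "iter_pd js (\<lambda>x::real^'d. \<Prod>j\<in>UNIV. h j (x $ j)) differentiable (at x)"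
proof -
  obtain D where D0: "\<And>j. D j 0 = h j" and D: "\<And>j k t. (D j k has_real_derivative D j (Suc k) t) (at t)"
    using assms unfolding infinitely_differentiable_def by metis
  have "(\<lambda>x::real^'d. \<Prod>j\<in>UNIV. h j (x $ j)) = coord_prod D (\<lambda>j. 0)"
    by (simp add: coord_prod_def D0 fun_eq_iff)
  then show ?thesis
    using iter_pd_coord_prod[where D=D, OF D] has_derivative_coord_prod[where D=D, OF D]
    by (auto simp: differentiable_def)
qed

lemma poly_exp_inv_1: "poly_exp_inv 1 t = (if t > 0 then exp (- inverse t) else 0)"
  by (simp add: poly_exp_inv_def)

definition box_bump :: "nat \<Rightarrow> real^'d \<Rightarrow> real^'d \<Rightarrow> real^'d \<Rightarrow> real" where
  "box_bump n a b x = (\<Prod>j\<in>UNIV. poly_exp_inv 1 (real (Suc n) * (x $ j - a $ j)) *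
                                   poly_exp_inv 1 (real (Suc n) * (b $ j - x $ j)))"

lemma box_bump_nonneg: "0 \<le> box_bump n a b x"
  and box_bump_le_1: "box_bump n a b x \<le> 1"
  unfolding box_bump_def poly_exp_inv_1
  by (auto intro!: prod_nonneg prod_le_1 mult_le_one simp: zero_less_mult_iff)

lemma box_bump_eq_0_outside:
  assumes "x \<notin> box a b"
  shows "box_bump n a b x = 0"
proof -
  obtain j where "x $ j \<le> a $ j \<or> b $ j \<le> x $ j"
    using assms by (auto simp: mem_box_cart not_less)
  then show ?thesis
    unfolding box_bump_def poly_exp_inv_1
    by (intro prod_zero bexI[of _ j]) (auto simp: zero_less_mult_iff)
qed

lemma box_bump_tendsto_indicator: "(\<lambda>n. box_bump n a b x) \<longlonglongrightarrow> indicator (box a b) x"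
proof (cases "x \<in> box a b")
  case True
  have exp_tendsto_1: "(\<lambda>n. poly_exp_inv 1 (real (Suc n) * t)) \<longlonglongrightarrow> 1" if "t > 0" for t
  proof -
    have "(\<lambda>n. exp (- (inverse (real (Suc n)) * inverse t))) \<longlonglongrightarrow> exp (- (0 * inverse t))"
      by (intro tendsto_exp tendsto_minus tendsto_mult tendsto_const LIMSEQ_inverse_real_of_nat)
    then show ?thesis
      using that by (simp add: poly_exp_inv_1)
  qed
  have "\<And>j. a $ j < x $ j \<and> x $ j < b $ j"
    using True by (auto simp: mem_box_cart)
  then have "(\<lambda>n. box_bump n a b x) \<longlonglongrightarrow> (\<Prod>j\<in>(UNIV::'a set). 1 * 1)"
    unfolding box_bump_def by (intro tendsto_prod tendsto_mult exp_tendsto_1) auto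
  with True show ?thesis
    by simp
qed (simp add: box_bump_eq_0_outside)

lemma iter_pd_box_bump_differentiable: "iter_pd js (box_bump n a b) differentiable (at x)"
proof -
  let ?c = "real (Suc n)"
  have "box_bump n a b = (\<lambda>x. \<Prod>j\<in>UNIV. poly_exp_inv 1 (?c * x $ j + - ?c * a $ j) *
                                           poly_exp_inv 1 (- ?c * x $ j + ?c * b $ j))"
    unfolding box_bump_def by (simp add: algebra_simps)
  then show ?thesis
    by (simp only:) (intro iter_pd_prod_differentiable infinitely_differentiable_mult
        infinitely_differentiable_affine infinitely_differentiable_poly_exp_inv)
qed

lemma test_fun_box_bump:
  assumes "cbox a b \<subseteq> \<Omega>"
  shows "test_fun \<Omega> (box_bump n a b)"
proof -
  have support: "closure {x. box_bump n a b x \<noteq> 0} \<subseteq> cbox a b"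
    using box_bump_eq_0_outside box_subset_cbox by (intro closure_minimal) blast+
  then have "compact (closure {x. box_bump n a b x \<noteq> 0})"
    using bounded_subset[OF bounded_cbox] closure_subset compact_closure by blast
  with support show ?thesis
    unfolding test_fun_def using assms iter_pd_box_bump_differentiable by blast
qed

lemma continuous_on_box_bump: "continuous_on S (box_bump n a b)"
proof -
  have "box_bump n a b differentiable (at x)" for x
    using iter_pd_box_bump_differentiable[of "[]"] by simp
  then show ?thesis
    by (simp add: differentiable_at_imp_differentiable_on differentiable_imp_continuous_on)
qed

section \<open>The fundamental lemma of the calculus of variations\<close>

lemma integral_mult_indicator_box_eq_0:
  fixes g :: "real^'d \<Rightarrow> real"
  assumes \<Omega>: "\<Omega> \<in> sets lebesgue"
    and g: "integrable (lebesgue_on \<Omega>) g"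
    and test: "\<And>\<phi>. test_fun \<Omega> \<phi> \<Longrightarrow> (LINT x|lebesgue_on \<Omega>. g x * \<phi> x) = 0"
    and ab: "cbox a b \<subseteq> \<Omega>"
  shows "(LINT x|lebesgue_on \<Omega>. g x * indicator (box a b) x) = 0"
proof -
  have [measurable]: "g \<in> borel_measurable (lebesgue_on \<Omega>)"
    using g by (rule borel_measurable_integrable)
  have "(\<lambda>n. LINT x|lebesgue_on \<Omega>. g x * box_bump n a b x)
          \<longlonglongrightarrow> (LINT x|lebesgue_on \<Omega>. g x * indicator (box a b) x)"
  proof (rule integral_dominated_convergence[where w="\<lambda>x. norm (g x)"])
    have "indicator (box a b) \<in> borel_measurable (lebesgue_on \<Omega>)"
      by (intro measurable_restrict_space1 borel_measurable_indicator fmeasurableD lmeasurable_box)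
    then show "(\<lambda>x. g x * indicator (box a b) x) \<in> borel_measurable (lebesgue_on \<Omega>)"
      by measurable
    show "(\<lambda>x. g x * box_bump n a b x) \<in> borel_measurable (lebesgue_on \<Omega>)" for n
      using continuous_imp_measurable_on_sets_lebesgue[OF continuous_on_box_bump \<Omega>]
      by measurable
    show "AE x in lebesgue_on \<Omega>. norm (g x * box_bump n a b x) \<le> norm (g x)" for n
      using box_bump_nonneg[of n a b] box_bump_le_1[of n a b]
      by (intro AE_I2) (simp add: abs_mult mult_left_le)
    show "AE x in lebesgue_on \<Omega>. (\<lambda>n. g x * box_bump n a b x) \<longlonglongrightarrow> g x * indicator (box a b) x"
      by (intro AE_I2 tendsto_mult tendsto_const box_bump_tendsto_indicator)
  qed (use g in simp)
  moreover have "(LINT x|lebesgue_on \<Omega>. g x * box_bump n a b x) = 0" for n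
    using test test_fun_box_bump[OF ab] by blast
  ultimately show ?thesis
    by (simp add: LIMSEQ_const_iff)
qed

lemma AE_eq_0_if_box_integrals_eq_0_lborel:
  fixes h :: "'a::euclidean_space \<Rightarrow> real"
  assumes [measurable]: "h \<in> borel_measurable borel"
    and h: "integrable lborel h"
    and box: "\<And>a b. (LINT x|lborel. h x * indicator (box a b) x) = 0"
  shows "AE x in lborel. h x = 0"
proof -
  have box_nn: "(\<integral>\<^sup>+x. ennreal (h x) * indicator (box a b) x \<partial>lborel) =
                (\<integral>\<^sup>+x. ennreal (- h x) * indicator (box a b) x \<partial>lborel)" for a b
  proof -
    let ?P = "\<integral>\<^sup>+x. ennreal (h x * indicator (box a b) x) \<partial>lborel"
    let ?N = "\<integral>\<^sup>+x. ennreal (- (h x * indicator (box a b) x)) \<partial>lborel"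
    have hab: "integrable lborel (\<lambda>x. h x * indicator (box a b) x)"
      using h by (rule integrable_real_mult_indicator[rotated]) simp
    then have "?P < \<infinity>" "?N < \<infinity>"
      unfolding real_integrable_def by (auto simp: less_top)
    then have "?P = ennreal (enn2real ?P)" "?N = ennreal (enn2real ?N)"
      by simp_all
    moreover have "enn2real ?P = enn2real ?N"
      using real_lebesgue_integral_def[OF hab] box[of a b] by simp
    ultimately have "?P = ?N"
      by metis
    then show ?thesis
      by (simp add: mult.commute[of _ "indicator _ _"] indicator_mult_ennreal)
  qed
  have "density lborel (\<lambda>x. ennreal (h x)) = density lborel (\<lambda>x. ennreal (- h x))"
  proof (rule measure_eqI_generator_eq[where E="range (\<lambda>(a, b). box a b)" and \<Omega>=UNIV
        and A="\<lambda>i. box (- real i *\<^sub>R One) (real i *\<^sub>R One)"])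
    show "Int_stable (range (\<lambda>(a, b). box a b :: 'a set))"
      by (auto simp: Int_stable_def box_Int_box)
    show "emeasure (density lborel (\<lambda>x. ennreal (h x))) X =
          emeasure (density lborel (\<lambda>x. ennreal (- h x))) X"
      if "X \<in> range (\<lambda>(a, b). box a b)" for X
      using that box_nn by (auto simp: emeasure_density)
    show "emeasure (density lborel (\<lambda>x. ennreal (h x))) (box (- real i *\<^sub>R One) (real i *\<^sub>R One)) \<noteq> \<infinity>" for i
    proof -
      have "emeasure (density lborel (\<lambda>x. ennreal (h x))) (box (- real i *\<^sub>R One) (real i *\<^sub>R One))
            \<le> (\<integral>\<^sup>+x. ennreal (h x) \<partial>lborel)"
        by (subst emeasure_density) (auto intro!: nn_integral_mono split: split_indicator)
      also have "\<dots> < \<infinity>"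
        using h unfolding real_integrable_def by (simp add: less_top)
      finally show ?thesis
        by simp
    qed
    show "sets (density lborel (\<lambda>x. ennreal (h x))) = sigma_sets UNIV (range (\<lambda>(a, b). box a b))"
      and "sets (density lborel (\<lambda>x. ennreal (- h x))) = sigma_sets UNIV (range (\<lambda>(a, b). box a b))"
      by (simp_all add: borel_eq_box)
  qed (auto simp: UN_box_eq_UNIV)
  then have "AE x in lborel. ennreal (h x) = ennreal (- h x)"
    by (intro sigma_finite_measure.density_unique[OF sigma_finite_lborel]) auto
  moreover have "ennreal r = ennreal (- r) \<Longrightarrow> r = 0" for r :: real
    by (cases "r \<ge> 0") (auto simp: ennreal_neg)
  ultimately show ?thesis
    by auto
qed

lemma AE_eq_0_if_box_integrals_eq_0:
  fixes h :: "'a::euclidean_space \<Rightarrow> real"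
  assumes h: "integrable lebesgue h"
    and box: "\<And>a b. (LINT x|lebesgue. h x * indicator (box a b) x) = 0"
  shows "AE x in lebesgue. h x = 0"
proof -
  have h_measurable [measurable]: "h \<in> borel_measurable lebesgue"
    using h by (rule borel_measurable_integrable)
  then obtain h' where [measurable]: "h' \<in> borel_measurable lborel"
    and "AE x in lborel. h x = h' x"
    using completion_ex_borel_measurable_real by blast
  then have eq: "AE x in lebesgue. h x = h' x"
    by (intro AE_completion)
  have "integrable lebesgue h'"
    by (rule integrable_cong_AE_imp[OF h _ eq]) (auto intro: measurable_completion)
  then have "integrable lborel h'"
    by (simp add: integrable_completion)
  moreover have "(LINT x|lborel. h' x * indicator (box a b) x) = 0" for a b
  proof -
    have "(LINT x|lborel. h' x * indicator (box a b) x) = (LINT x|lebesgue. h' x * indicator (box a b) x)"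
      by (rule integral_completion[symmetric]) simp
    also have "\<dots> = (LINT x|lebesgue. h x * indicator (box a b) x)"
    proof (rule integral_cong_AE)
      show "(\<lambda>x. h x * indicator (box a b) x) \<in> borel_measurable lebesgue"
        by (intro borel_measurable_times h_measurable borel_measurable_indicator fmeasurableD lmeasurable_box)
    qed (use eq in \<open>auto intro: measurable_completion\<close>)
    finally show ?thesis
      using box by simp
  qed
  ultimately have "AE x in lborel. h' x = 0"
    by (intro AE_eq_0_if_box_integrals_eq_0_lborel) simp_all
  then show ?thesis
    using eq by (auto dest: AE_completion)
qed

lemma negligible_nonzero_in_box_if_test_fun_integrals_eq_0:
  fixes g :: "real^'d \<Rightarrow> real"
  assumes \<Omega>: "\<Omega> \<in> sets lebesgue"
    and g: "integrable (lebesgue_on \<Omega>) g"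
    and test: "\<And>\<phi>. test_fun \<Omega> \<phi> \<Longrightarrow> (LINT x|lebesgue_on \<Omega>. g x * \<phi> x) = 0"
    and cd: "cbox c d \<subseteq> \<Omega>"
  shows "negligible {x \<in> box c d. g x \<noteq> 0}"
proof -
  define h where "h y = (if y \<in> \<Omega> then g y else 0) * indicator (box c d) y" for y
  have "integrable lebesgue (\<lambda>y. if y \<in> \<Omega> then g y else 0)"
    using g by (simp add: Lebesgue_Measure.integrable_restrict_UNIV[OF \<Omega>])
  then have "integrable lebesgue h"
    unfolding h_def by (rule integrable_real_mult_indicator[rotated]) simp
  moreover have "(LINT y|lebesgue. h y * indicator (box a b) y) = 0" for a b
  proof -
    obtain a' b' where ab': "box c d \<inter> box a b = box a' b'"
      using box_Int_box[of c d a b] by blast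
    have "(LINT y|lebesgue. h y * indicator (box a b) y) =
          (LINT y|lebesgue. (if y \<in> \<Omega> then g y * indicator (box a' b') y else 0))"
      by (rule Bochner_Integration.integral_cong) (auto simp: h_def ab'[symmetric] split: split_indicator)
    also have "\<dots> = (LINT y|lebesgue_on \<Omega>. g y * indicator (box a' b') y)"
      by (rule Lebesgue_Measure.integral_restrict_UNIV[OF \<Omega>])
    also have "\<dots> = 0"
    proof (cases "box a' b' = {}")
      case False
      then have "cbox a' b' = closure (box c d \<inter> box a b)"
        by (simp add: ab')
      also have "\<dots> \<subseteq> cbox c d"
        by (meson Int_lower1 box_subset_cbox closed_cbox closure_minimal order_trans)
      finally show ?thesis
        using cd by (intro integral_mult_indicator_box_eq_0[OF \<Omega> g test]) auto
    qed simp
    finally show ?thesis .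
  qed
  ultimately have "AE y in lebesgue. h y = 0"
    by (rule AE_eq_0_if_box_integrals_eq_0)
  then obtain N where "N \<in> null_sets lebesgue" "{y. h y \<noteq> 0} \<subseteq> N"
    by (auto simp: eventually_ae_filter)
  moreover have "{x \<in> box c d. g x \<noteq> 0} \<subseteq> {y. h y \<noteq> 0}"
    using cd box_subset_cbox by (auto simp: h_def)
  ultimately show ?thesis
    using negligible_iff_null_sets negligible_subset by blast
qed

lemma AE_eq_0_if_test_fun_integrals_eq_0:
  fixes g :: "real^'d \<Rightarrow> real"
  assumes \<Omega>: "open \<Omega>"
    and g: "integrable (lebesgue_on \<Omega>) g"
    and test: "\<And>\<phi>. test_fun \<Omega> \<phi> \<Longrightarrow> (LINT x|lebesgue_on \<Omega>. g x * \<phi> x) = 0"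
  shows "AE x in lebesgue_on \<Omega>. g x = 0"
proof -
  have \<Omega>_sets: "\<Omega> \<in> sets lebesgue"
    using \<Omega> by simp
  define S where "S = {x \<in> \<Omega>. g x \<noteq> 0}"
  have "negligible S"
  proof (rule locally_negligible_alt[THEN iffD2], intro ballI)
    fix x assume "x \<in> S"
    then obtain c d where cd: "cbox c d \<subseteq> \<Omega>" "x \<in> box c d"
      using open_contains_cbox[OF \<Omega>] by (metis (no_types, lifting) S_def mem_Collect_eq)
    have "negligible (S \<inter> box c d)"
      using negligible_nonzero_in_box_if_test_fun_integrals_eq_0[OF \<Omega>_sets g test cd(1)]
      by (rule negligible_subset) (auto simp: S_def)
    moreover have "openin (top_of_set S) (S \<inter> box c d)"
      by (rule openin_open_Int) (rule open_box)
    ultimately show "\<exists>U. openin (top_of_set S) U \<and> x \<in> U \<and> negligible U"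
      using cd \<open>x \<in> S\<close> by blast
  qed
  then have "AE x in lebesgue. x \<notin> S"
    by (simp add: negligible_iff_null_sets AE_not_in)
  then show ?thesis
    using \<Omega>_sets by (subst AE_restrict_space_iff) (auto simp: S_def)
qed

lemma integrable_component_if_L2:
  fixes w :: "real^'d \<Rightarrow> real^'n"
  assumes "\<Omega> \<in> lmeasurable" "w \<in> L2 \<Omega>"
  shows "integrable (lebesgue_on \<Omega>) (\<lambda>x. w x $ i)"
proof (rule Bochner_Integration.integrable_bound)
  interpret finite_measure "lebesgue_on \<Omega>"
    using assms(1) by (rule finite_measure_lebesgue_on)
  have w: "w \<in> borel_measurable (lebesgue_on \<Omega>)" "integrable (lebesgue_on \<Omega>) (\<lambda>x. (norm (w x))\<^sup>2)"
    using assms(2) by (auto simp: L2_def)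
  then show "integrable (lebesgue_on \<Omega>) (\<lambda>x. 1 + (norm (w x))\<^sup>2)"
    by simp
  show "(\<lambda>x. w x $ i) \<in> borel_measurable (lebesgue_on \<Omega>)"
    using measurable_compose[OF w(1) borel_measurable_nth] by simp
  show "AE x in lebesgue_on \<Omega>. norm (w x $ i) \<le> norm (1 + (norm (w x))\<^sup>2)"
  proof (intro AE_I2)
    fix x
    have "0 \<le> (norm (w x) - 1)\<^sup>2"
      by simp
    then have "2 * norm (w x) \<le> 1 + (norm (w x))\<^sup>2"
      unfolding power2_eq_square by (simp add: algebra_simps)
    then have "norm (w x) \<le> 1 + (norm (w x))\<^sup>2"
      using norm_ge_zero[of "w x"] by linarith
    then show "norm (w x $ i) \<le> norm (1 + (norm (w x))\<^sup>2)"
      using component_le_norm_cart[of "w x" i] by simp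
  qed
qed

lemma zero_in_Hdiv: "(\<lambda>x. 0) \<in> Hdiv \<Omega>"
proof -
  have "(\<lambda>x. 0 :: real^'d^'d) \<in> L2 \<Omega>" "(\<lambda>x. 0 :: real^'d) \<in> L2 \<Omega>"
    by (simp_all add: L2_def)
  moreover have "is_wdiv \<Omega> (\<lambda>x. 0) (\<lambda>x. 0)"
    by (simp add: is_wdiv_def)
  ultimately show ?thesis
    unfolding Hdiv_def by blast
qed

lemma wdiv_Hdiv:
  assumes "\<sigma> \<in> Hdiv \<Omega>"
  shows "wdiv \<Omega> \<sigma> \<in> L2 \<Omega> \<and> is_wdiv \<Omega> \<sigma> (wdiv \<Omega> \<sigma>)"
proof -
  have "\<exists>w. w \<in> L2 \<Omega> \<and> is_wdiv \<Omega> \<sigma> w"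
    using assms by (auto simp: Hdiv_def)
  then show ?thesis
    unfolding wdiv_def by (rule someI_ex)
qed

text \<open>\<open>wdiv\<close> picks an arbitrary weak divergence, so even for the zero field its vanishing
  rests on the fundamental lemma.\<close>
lemma AE_wdiv_zero_eq_0:
  assumes "open \<Omega>" "bounded \<Omega>"
  shows "AE x in lebesgue_on \<Omega>. wdiv \<Omega> (\<lambda>x. 0) x = 0"
proof -
  let ?w = "wdiv \<Omega> (\<lambda>x. 0)"
  have "AE x in lebesgue_on \<Omega>. ?w x $ i = 0" for i
  proof (rule AE_eq_0_if_test_fun_integrals_eq_0[OF assms(1)])
    show "integrable (lebesgue_on \<Omega>) (\<lambda>x. ?w x $ i)"
      using assms wdiv_Hdiv[OF zero_in_Hdiv] by (intro integrable_component_if_L2 lmeasurable_open) auto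
    show "(LINT x|lebesgue_on \<Omega>. ?w x $ i * \<phi> x) = 0" if "test_fun \<Omega> \<phi>" for \<phi>
      using wdiv_Hdiv[OF zero_in_Hdiv] that unfolding is_wdiv_def by fastforce
  qed
  then have "AE x in lebesgue_on \<Omega>. \<forall>i. ?w x $ i = 0"
    by (rule eventually_all_finite)
  then show ?thesis
    by eventually_elim (simp add: vec_eq_iff)
qed

lemma L2ip_AE_zero_left:
  assumes "AE x in lebesgue_on \<Omega>. f x = 0"
  shows "L2ip \<Omega> f g = 0"
  unfolding L2ip_def by (rule integral_eq_zero_AE) (use assms in \<open>eventually_elim, simp\<close>)

lemma AE_eq_0_if_hdiv_norm_eq_0:
  assumes "\<sigma> \<in> L2 \<Omega>" "hdiv_norm \<Omega> \<sigma> = 0"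
  shows "AE x in lebesgue_on \<Omega>. \<sigma> x = 0"
proof -
  have "0 \<le> L2ip \<Omega> \<sigma> \<sigma>" "0 \<le> L2ip \<Omega> (wdiv \<Omega> \<sigma>) (wdiv \<Omega> \<sigma>)"
    unfolding L2ip_def by (auto intro!: integral_nonneg_AE)
  then have "L2ip \<Omega> \<sigma> \<sigma> = 0"
    using assms(2) by (simp add: hdiv_norm_def)
  moreover have "integrable (lebesgue_on \<Omega>) (\<lambda>x. \<sigma> x \<bullet> \<sigma> x)"
    using assms(1) by (simp add: L2_def power2_norm_eq_inner)
  ultimately have "AE x in lebesgue_on \<Omega>. \<sigma> x \<bullet> \<sigma> x = 0"
    by (simp add: L2ip_def integral_nonneg_eq_0_iff_AE)
  then show ?thesis
    by eventually_elim simp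
qed

lemma a_form_zero_left: "a_form \<Omega> \<mu> lam (\<lambda>x. 0) \<tau> = 0"
  by (simp add: a_form_def L2ip_def dev_def trace_def)

lemma body_force_orthogonal_if_zero_stress:
  assumes "open \<Omega>" "bounded \<Omega>" "cont_solves \<Omega> \<mu> lam f G F (\<lambda>x. 0) u" "v \<in> L2 \<Omega>"
  shows "L2ip \<Omega> f v = 0"
proof -
  have "L2ip \<Omega> f v = L2ip \<Omega> (wdiv \<Omega> (\<lambda>x. 0)) v"
    using assms(3,4) by (simp add: cont_solves_def b_form_def)
  also have "\<dots> = 0"
    by (rule L2ip_AE_zero_left[OF AE_wdiv_zero_eq_0[OF assms(1,2)]])
  finally show ?thesis .
qed

lemma load_vanishes_on_div_free_if_zero_stress:
  assumes "cont_solves \<Omega> \<mu> lam f G F (\<lambda>x. 0) u" "\<tau> \<in> Sigma_sym \<Omega> lam"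
    and "AE x in lebesgue_on \<Omega>. wdiv \<Omega> \<tau> x = 0"
  shows "bdry_pair \<Omega> \<tau> G + L2ip \<Omega> F \<tau> = 0"
proof -
  have "a_form \<Omega> \<mu> lam (\<lambda>x. 0) \<tau> + b_form \<Omega> \<tau> u = bdry_pair \<Omega> \<tau> G + L2ip \<Omega> F \<tau>"
    using assms(1,2) by (simp add: cont_solves_def)
  then show ?thesis
    using L2ip_AE_zero_left[OF assms(3)] by (simp add: a_form_zero_left b_form_def)
qed

lemma weak_material_robust_if_coercive_and_kernel_div_free:
  assumes \<Omega>: "open \<Omega>" "bounded \<Omega>" and Vh: "Vh \<subseteq> L2 \<Omega>"
    and coercive: "\<exists>\<alpha>>0. \<forall>\<tau>\<in>Sh. (\<forall>v\<in>Vh. \<forall>\<xi>\<in>Xh. b_form \<Omega> \<tau> v + c_form \<Omega> \<tau> \<xi> = 0) \<longrightarrow>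
                     a_form \<Omega> \<mu> lam \<tau> \<tau> \<ge> \<alpha> * (hdiv_norm \<Omega> \<tau>)\<^sup>2"
    and kernel: "{\<tau> \<in> Sh. \<forall>v \<in> Vh. \<forall>\<xi> \<in> Xh. L2ip \<Omega> (wdiv \<Omega> \<tau>) v + L2ip \<Omega> \<tau> \<xi> = 0}
                   \<subseteq> {\<tau> \<in> Sigma_sym \<Omega> lam. AE x in lebesgue_on \<Omega>. wdiv \<Omega> \<tau> x = 0}"
  shows "weak_material_robust \<Omega> \<mu> lam Sh Vh Xh"
  unfolding weak_material_robust_def
proof (intro allI impI; elim conjE exE)
  fix f G F \<sigma>h uh \<omega>h u
  assume cont: "cont_solves \<Omega> \<mu> lam f G F (\<lambda>x. 0) u"
    and disc: "weak_disc_solves \<Omega> \<mu> lam Sh Vh Xh f G F \<sigma>h uh \<omega>h"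
  then have \<sigma>h: "\<sigma>h \<in> Sh" and "\<omega>h \<in> Xh" and c0: "\<forall>\<xi>\<in>Xh. c_form \<Omega> \<sigma>h \<xi> = 0"
    by (simp_all add: weak_disc_solves_def)
  have b0: "\<forall>v\<in>Vh. b_form \<Omega> \<sigma>h v = 0"
    using disc Vh body_force_orthogonal_if_zero_stress[OF \<Omega> cont]
    by (auto simp: weak_disc_solves_def)
  then have "\<sigma>h \<in> Sigma_sym \<Omega> lam" and div_free: "AE x in lebesgue_on \<Omega>. wdiv \<Omega> \<sigma>h x = 0"
    using kernel \<sigma>h c0 by (auto simp: b_form_def c_form_def)
  have "a_form \<Omega> \<mu> lam \<sigma>h \<sigma>h + b_form \<Omega> \<sigma>h uh + c_form \<Omega> \<sigma>h \<omega>h =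
        bdry_pair \<Omega> \<sigma>h G + L2ip \<Omega> F \<sigma>h"
    using disc \<sigma>h unfolding weak_disc_solves_def by blast
  also have "\<dots> = 0"
    using load_vanishes_on_div_free_if_zero_stress[OF cont \<open>\<sigma>h \<in> Sigma_sym \<Omega> lam\<close> div_free] .
  finally have "a_form \<Omega> \<mu> lam \<sigma>h \<sigma>h = 0"
    using c0 \<open>\<omega>h \<in> Xh\<close> L2ip_AE_zero_left[OF div_free] by (simp add: b_form_def)
  moreover obtain \<alpha> where "\<alpha> > 0" "a_form \<Omega> \<mu> lam \<sigma>h \<sigma>h \<ge> \<alpha> * (hdiv_norm \<Omega> \<sigma>h)\<^sup>2"
    using coercive \<sigma>h b0 c0 by auto
  ultimately have "hdiv_norm \<Omega> \<sigma>h = 0"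
    by (simp add: mult_le_0_iff)
  moreover have "\<sigma>h \<in> L2 \<Omega>"
    using \<open>\<sigma>h \<in> Sigma_sym \<Omega> lam\<close> by (simp add: Sigma_sym_def Sigma_full_def Hdiv_def)
  ultimately show "AE x in lebesgue_on \<Omega>. \<sigma>h x = 0"
    by (intro AE_eq_0_if_hdiv_norm_eq_0)
qed

lemma weak_material_robust_if_kernel_div_free:
  assumes "open \<Omega>" "bounded \<Omega>" "Vh \<subseteq> L2 \<Omega>" "weak_BB \<Omega> \<mu> lam Sh Vh Xh"
    and "{\<tau> \<in> Sh. \<forall>v \<in> Vh. \<forall>\<xi> \<in> Xh. L2ip \<Omega> (wdiv \<Omega> \<tau>) v + L2ip \<Omega> \<tau> \<xi> = 0}
           \<subseteq> {\<tau> \<in> Sigma_sym \<Omega> lam. AE x in lebesgue_on \<Omega>. wdiv \<Omega> \<tau> x = 0}"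
  shows "weak_material_robust \<Omega> \<mu> lam Sh Vh Xh"
  using assms(4) unfolding weak_BB_def
  by (intro weak_material_robust_if_coercive_and_kernel_div_free[OF assms(1-3) _ assms(5)]) (rule conjunct1)

lemma strong_material_robust_iff_weak:
  "strong_material_robust \<Omega> \<mu> lam Sh Vh \<longleftrightarrow> weak_material_robust \<Omega> \<mu> lam Sh Vh {\<lambda>x. 0}"
  by (simp add: strong_material_robust_def weak_material_robust_def strong_disc_solves_def
      weak_disc_solves_def c_form_def L2ip_def)

lemma strong_material_robust_if_kernel_div_free:
  assumes "open \<Omega>" "bounded \<Omega>" "Vh \<subseteq> L2 \<Omega>" "strong_BB \<Omega> \<mu> lam Sh Vh"
    and "{\<tau> \<in> Sh. \<forall>v \<in> Vh. L2ip \<Omega> (wdiv \<Omega> \<tau>) v = 0}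
           \<subseteq> {\<tau> \<in> Sigma_sym \<Omega> lam. AE x in lebesgue_on \<Omega>. wdiv \<Omega> \<tau> x = 0}"
  shows "strong_material_robust \<Omega> \<mu> lam Sh Vh"
  using assms unfolding strong_material_robust_iff_weak strong_BB_def
  by (intro weak_material_robust_if_coercive_and_kernel_div_free) (auto simp: c_form_def L2ip_def)

theorem theorem4p5:
  fixes \<Omega> :: "(real^'d) set" and \<mu> :: real and lam :: ereal
    and Ssym :: "(real^'d \<Rightarrow> real^'d^'d) set" and Vs :: "(real^'d \<Rightarrow> real^'d) set"
    and Sw :: "(real^'d \<Rightarrow> real^'d^'d) set" and Vw :: "(real^'d \<Rightarrow> real^'d) set"
    and Xw :: "(real^'d \<Rightarrow> real^'d^'d) set"
  assumes dim: "CARD('d) = 2 \<or> CARD('d) = 3"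
    and dom: "lipschitz_domain \<Omega>" "polyhedral_domain \<Omega>"
    and mu: "\<mu> > 0" and lam: "lam \<ge> 0"
  shows
   "(fin_dim_space Ssym \<and> Ssym \<subseteq> Sigma_sym \<Omega> lam \<and> fin_dim_space Vs \<and> Vs \<subseteq> L2 \<Omega> \<and>
     strong_BB \<Omega> \<mu> lam Ssym Vs \<and>
     {\<tau> \<in> Ssym. \<forall>v \<in> Vs. L2ip \<Omega> (wdiv \<Omega> \<tau>) v = 0}
        \<subseteq> {\<tau> \<in> Sigma_sym \<Omega> lam. AE x in lebesgue_on \<Omega>. wdiv \<Omega> \<tau> x = 0}
     \<longrightarrow> strong_material_robust \<Omega> \<mu> lam Ssym Vs)
  \<and> (fin_dim_space Sw \<and> Sw \<subseteq> Sigma_full \<Omega> lam \<and> fin_dim_space Vw \<and> Vw \<subseteq> L2 \<Omega> \<and>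
     fin_dim_space Xw \<and> Xw \<subseteq> Xi \<Omega> \<and>
     weak_BB \<Omega> \<mu> lam Sw Vw Xw \<and>
     {\<tau> \<in> Sw. \<forall>v \<in> Vw. \<forall>\<xi> \<in> Xw. L2ip \<Omega> (wdiv \<Omega> \<tau>) v + L2ip \<Omega> \<tau> \<xi> = 0}
        \<subseteq> {\<tau> \<in> Sigma_sym \<Omega> lam. AE x in lebesgue_on \<Omega>. wdiv \<Omega> \<tau> x = 0}
     \<longrightarrow> weak_material_robust \<Omega> \<mu> lam Sw Vw Xw)"
proof -
  have "open \<Omega>" "bounded \<Omega>"
    using dom(1) by (simp_all add: lipschitz_domain_def)
  then show ?thesis
    by (intro conjI impI; elim conjE)
      (rule strong_material_robust_if_kernel_div_free weak_material_robust_if_kernel_div_free; assumption)+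
qed

end
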